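(* Let $H$ be a digraph with at least two vertices and $s\in V(H)$ such that every vertex of $H$ is reachable from $s$, and let $(\hat T,\{B_x\}_{x\in V(\hat T)})$ be the $s$-rooted cut decomposition of $H$. Let $y$ be a node of $\hat T$ such that the path in $\hat T$ from $s$ to $y$ contains at least $\ell\ge 1$ nodes $x$ whose sets $B_x$ are non-degenerate. Then $H$ contains an out-tree rooted at $s$ with at least $\ell$ leaves.
   Context: Digraphs are finite and without loops; paths are directed. An out-tree is an oriented tree with exactly one vertex of in-degree zero (its root); its leaves are its vertices of out-degree zero. A vertex $v$ is bi-reachable from $r$ if there are two internally vertex-disjoint directed paths from $r$ to $v$. For a digraph $H$ with at least two vertices and $r\in V(H)$ such that every vertex of $H$ is reachable from $r$, the diblock $B_r$ of $r$ in $H$ is the set of all vertices bi-reachable from $r$, together with $r$ and all out-neighbours of $r$. For $x\in B_r\setminus\{r\}$ let $X_x$ be the set of vertices $v\in V(H)\setminus B_r$ such that every directed $r$–$v$ path intersects $B_r$ for the last time in $x$; $x$ is a bottleneck of $B_r$ if $X_x\ne\emptyset$ (the sets $X_x$ partition $V(H)\setminus B_r$). The $r$-rooted cut decomposition $(\hat T,\{B_x\}_{x\in V(\hat T)})$ of $H$ is defined recursively: $\hat T$ is a rooted tree with root $r$ and $V(\hat T)\subseteq V(H)$; the set associated with the root is $B_r$; the children of $r$ are the bottlenecks of $B_r$; and for each bottleneck $x$, the subtree of $\hat T$ rooted at $x$ together with its associated sets is the $x$-rooted cut decomposition of the induced subgraph $H[X_x\cup\{x\}]$. A set $B_x$ is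 degenerate if $x$ is an internal (non-leaf) node of $\hat T$ and $|B_x|=2$; otherwise it is non-degenerate. *)

theory Defs
  imports Main
begin

definition is_path :: "'a set \<Rightarrow> ('a \<times> 'a) set \<Rightarrow> 'a list \<Rightarrow> 'a \<Rightarrow> 'a \<Rightarrow> bool" where
  "is_path V A p u v \<longleftrightarrow> p \<noteq> [] \<and> hd p = u \<and> last p = v \<and> distinct p \<and> set p \<subseteq> V \<and>
     (\<forall>i. Suc i < length p \<longrightarrow> (p ! i, p ! Suc i) \<in> A)"

definition ind :: "('a \<times> 'a) set \<Rightarrow> 'a set \<Rightarrow> ('a \<times> 'a) set" where
  "ind A S = A \<inter> (S \<times> S)"

definition bireach :: "'a set \<Rightarrow> ('a \<times> 'a) set \<Rightarrow> 'a \<Rightarrow> 'a \<Rightarrow> bool" where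
  "bireach V A r v \<longleftrightarrow> (\<exists>p q. is_path V A p r v \<and> is_path V A q r v \<and> p \<noteq> q \<and>
      (set p - {r, v}) \<inter> (set q - {r, v}) = {})"

definition diblock :: "'a set \<Rightarrow> ('a \<times> 'a) set \<Rightarrow> 'a \<Rightarrow> 'a set" where
  "diblock V A r = {v \<in> V. bireach V A r v} \<union> {r} \<union> {v. (r, v) \<in> A}"

definition Xset :: "'a set \<Rightarrow> ('a \<times> 'a) set \<Rightarrow> 'a \<Rightarrow> 'a \<Rightarrow> 'a set" where
  "Xset V A r x = {v \<in> V - diblock V A r.
      \<forall>p. is_path V A p r v \<longrightarrow> last (filter (\<lambda>u. u \<in> diblock V A r) p) = x}"

definition bottleneck :: "'a set \<Rightarrow> ('a \<times> 'a) set \<Rightarrow> 'a \<Rightarrow> 'a \<Rightarrow> bool" where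
  "bottleneck V A r x \<longleftrightarrow> x \<in> diblock V A r - {r} \<and> Xset V A r x \<noteq> {}"

text \<open>Root-to-node paths of the s-rooted cut decomposition of (V,A): each entry (x,S) is a
  node x of the decomposition tree together with the vertex set S of the subgraph H[S] whose
  x-rooted cut decomposition is the subtree at x; its associated set is diblock of x in H[S].\<close>
inductive cd_path :: "'a set \<Rightarrow> ('a \<times> 'a) set \<Rightarrow> 'a \<Rightarrow> ('a \<times> 'a set) list \<Rightarrow> bool"
  for V A s where
  root: "cd_path V A s [(s, V)]"
| child: "cd_path V A s (ps @ [(x, S)]) \<Longrightarrow> bottleneck S (ind A S) x b \<Longrightarrow>
    cd_path V A s (ps @ [(x, S), (b, insert b (Xset S (ind A S) x b))])"

text \<open>B_x degenerate: x internal node (B_x has a bottleneck) and |B_x| = 2\<close>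
definition nondeg :: "('a \<times> 'a) set \<Rightarrow> 'a \<times> 'a set \<Rightarrow> bool" where
  "nondeg A xS = (case xS of (x, S) \<Rightarrow>
     \<not> ((\<exists>b. bottleneck S (ind A S) x b) \<and> card (diblock S (ind A S) x) = 2))"

definition adj :: "('a \<times> 'a) set \<Rightarrow> 'a \<Rightarrow> 'a \<Rightarrow> bool" where
  "adj A u v \<longleftrightarrow> (u, v) \<in> A \<or> (v, u) \<in> A"

definition oriented_tree :: "'a set \<Rightarrow> ('a \<times> 'a) set \<Rightarrow> bool" where
  "oriented_tree V A \<longleftrightarrow> finite V \<and> V \<noteq> {} \<and> A \<subseteq> V \<times> V \<and>
     (\<forall>v. (v, v) \<notin> A) \<and> (\<forall>u v. (u, v) \<in> A \<longrightarrow> (v, u) \<notin> A) \<and>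
     (\<forall>u\<in>V. \<forall>v\<in>V. (u, v) \<in> (A \<union> A\<inverse>)\<^sup>*) \<and>
     \<not> (\<exists>c. 3 \<le> length c \<and> distinct c \<and> set c \<subseteq> V \<and>
          (\<forall>i < length c. adj A (c ! i) (c ! ((i + 1) mod length c))))"

definition out_tree :: "'a set \<Rightarrow> ('a \<times> 'a) set \<Rightarrow> 'a \<Rightarrow> bool" where
  "out_tree V A r \<longleftrightarrow> oriented_tree V A \<and> {v \<in> V. \<forall>u. (u, v) \<notin> A} = {r}"

definition leaves :: "'a set \<Rightarrow> ('a \<times> 'a) set \<Rightarrow> 'a set" where
  "leaves V A = {v \<in> V. \<forall>w. (v, w) \<notin> A}"

end

theory Submission
  imports Defs
begin

(* Walk down the decomposition path, keeping an out-tree of H rooted at s that has the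
   current node x as a leaf and meets the current subgraph H[S] only in x. Passing to a
   bottleneck b of B_x, attach an x-b path inside the diblock: it avoids X_b, so b replaces x
   as a leaf. If B_x is non-degenerate, a third vertex of the diblock yields a second branch
   at x that is disjoint from the first one and from X_b; then x is no longer a leaf while the
   new branch ends in a fresh one, so the number of leaves grows by one. The initial leaf s
   makes up for the last node of the path, whose non-degeneracy cannot be exploited. *)

definition undirected_cycle :: "'a set \<Rightarrow> ('a \<times> 'a) set \<Rightarrow> 'a list \<Rightarrow> bool" where
  "undirected_cycle V A c \<longleftrightarrow> 3 \<le> length c \<and> distinct c \<and> set c \<subseteq> V \<and>
     (\<forall>i < length c. adj A (c ! i) (c ! ((i + 1) mod length c)))"

lemma oriented_tree_iff:
  "oriented_tree V A \<longleftrightarrow> finite V \<and> V \<noteq> {} \<and> A \<subseteq> V \<times> V \<and>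
     (\<forall>v. (v, v) \<notin> A) \<and> (\<forall>u v. (u, v) \<in> A \<longrightarrow> (v, u) \<notin> A) \<and>
     (\<forall>u\<in>V. \<forall>v\<in>V. (u, v) \<in> (A \<union> A\<inverse>)\<^sup>*) \<and> \<not> (\<exists>c. undirected_cycle V A c)"
  unfolding oriented_tree_def undirected_cycle_def by blast

lemma cyclic_predecessor:
  fixes n i :: nat
  assumes "3 \<le> n" "i < n"
  obtains j where "j < n" "(j + 1) mod n = i" "(i + 1) mod n \<noteq> j"
proof (cases "i = 0")
  case True
  then show ?thesis using assms by (intro that[of "n - 1"]) auto
next
  case False
  show ?thesis
  proof (cases "i = n - 1")
    case True
    then show ?thesis using assms False by (intro that[of "i - 1"]) auto
  next
    case False
    then show ?thesis using assms \<open>i \<noteq> 0\<close> by (intro that[of "i - 1"]) auto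
  qed
qed

lemma undirected_cycle_avoids_pendant:
  assumes c: "undirected_cycle V A c" and pendant: "\<And>z. adj A w z \<Longrightarrow> z = u"
  shows "w \<notin> set c"
proof
  assume "w \<in> set c"
  then obtain i where i: "i < length c" "c ! i = w" by (auto simp: in_set_conv_nth)
  have len: "3 \<le> length c" and dc: "distinct c"
    and ac: "\<forall>i < length c. adj A (c ! i) (c ! ((i + 1) mod length c))"
    using c by (auto simp: undirected_cycle_def)
  obtain j where j: "j < length c" "(j + 1) mod length c = i" "(i + 1) mod length c \<noteq> j"
    using cyclic_predecessor[OF len i(1)] .
  \<comment> \<open>both cycle neighbours of the pendant vertex w would have to be u\<close>
  have "c ! ((i + 1) mod length c) = u" using ac i pendant by auto
  moreover have "c ! j = u" using ac j i pendant by (metis adj_def)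
  moreover have "(i + 1) mod length c < length c" using len by (intro mod_less_divisor) auto
  ultimately show False using dc j by (metis nth_eq_iff_index_eq)
qed

lemma undirected_cycle_add_pendant:
  assumes c: "undirected_cycle (insert w V) (insert (u, w) A) c"
    and A: "A \<subseteq> V \<times> V" and w: "w \<notin> V"
  shows "undirected_cycle V A c"
proof -
  have "w \<notin> set c"
    by (rule undirected_cycle_avoids_pendant[OF c]) (use A w in \<open>auto simp: adj_def\<close>)
  moreover have "(i + 1) mod length c < length c" if "i < length c" for i
    using that by (intro mod_less_divisor) auto
  ultimately show ?thesis
    using c unfolding undirected_cycle_def adj_def
    by (metis (lifting) insert_iff nth_mem Pair_inject subset_insert)
qed

definition path_arcs :: "'a list \<Rightarrow> ('a \<times> 'a) set" where
  "path_arcs p = set (zip p (tl p))"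

lemma path_arcs_Cons_Cons [simp]: "path_arcs (u # v # p) = insert (u, v) (path_arcs (v # p))"
  by (simp add: path_arcs_def)

lemma path_arcs_singleton [simp]: "path_arcs [u] = {}"
  by (simp add: path_arcs_def)

lemma leaves_subset: "leaves TV TA \<subseteq> TV"
  by (auto simp: leaves_def)

lemma out_tree_finite: "out_tree TV TA s \<Longrightarrow> finite TV"
  by (simp add: out_tree_def oriented_tree_def)

lemma out_tree_singleton: "out_tree {s} {} s"
proof -
  have "\<not> undirected_cycle {s} {} c" for c
  proof
    assume c: "undirected_cycle {s} {} c"
    then have "length c = card (set c)" by (simp add: undirected_cycle_def distinct_card)
    also have "\<dots> \<le> card {s}" using c by (intro card_mono) (auto simp: undirected_cycle_def)
    finally show False using c by (simp add: undirected_cycle_def)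
  qed
  then show ?thesis by (auto simp: out_tree_def oriented_tree_iff)
qed

lemma leaves_singleton: "leaves {s} {} = {s}"
  by (auto simp: leaves_def)

lemma oriented_tree_add_pendant:
  assumes T: "oriented_tree TV TA" and u: "u \<in> TV" and w: "w \<notin> TV"
  shows "oriented_tree (insert w TV) (insert (u, w) TA)"
  unfolding oriented_tree_iff
proof (intro conjI)
  let ?R = "insert (u, w) TA \<union> (insert (u, w) TA)\<inverse>"
  have sub: "TA \<subseteq> TV \<times> TV" and con: "\<forall>a\<in>TV. \<forall>b\<in>TV. (a, b) \<in> (TA \<union> TA\<inverse>)\<^sup>*"
    using T by (auto simp: oriented_tree_iff)
  have "(a, b) \<in> ?R\<^sup>*" if "a \<in> TV" "b \<in> TV" for a b
    using con that rtrancl_mono[of "TA \<union> TA\<inverse>" ?R] by blast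
  then have "(a, u) \<in> ?R\<^sup>* \<and> (u, a) \<in> ?R\<^sup>*" if "a \<in> insert w TV" for a
    using that u by auto
  then show "\<forall>a\<in>insert w TV. \<forall>b\<in>insert w TV. (a, b) \<in> ?R\<^sup>*"
    by (meson rtrancl_trans)
  show "\<not> (\<exists>c. undirected_cycle (insert w TV) (insert (u, w) TA) c)"
    using undirected_cycle_add_pendant[OF _ sub w] T by (auto simp: oriented_tree_iff)
  show "insert (u, w) TA \<subseteq> insert w TV \<times> insert w TV" using sub u by blast
  show "\<forall>v. (v, v) \<notin> insert (u, w) TA"
    and "\<forall>a b. (a, b) \<in> insert (u, w) TA \<longrightarrow> (b, a) \<notin> insert (u, w) TA"
    using T sub u w unfolding oriented_tree_iff by auto
qed (use T in \<open>auto simp: oriented_tree_iff\<close>)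

lemma out_tree_add_pendant:
  assumes T: "out_tree TV TA s" and u: "u \<in> TV" and w: "w \<notin> TV"
  shows "out_tree (insert w TV) (insert (u, w) TA) s"
proof -
  have "{v \<in> insert w TV. \<forall>z. (z, v) \<notin> insert (u, w) TA} = {v \<in> TV. \<forall>z. (z, v) \<notin> TA}"
    using u w by auto
  then show ?thesis using T oriented_tree_add_pendant[OF _ u w] by (simp add: out_tree_def)
qed

lemma leaves_add_pendant:
  assumes "TA \<subseteq> TV \<times> TV" and "w \<notin> TV" and "u \<noteq> w"
  shows "leaves (insert w TV) (insert (u, w) TA) = insert w (leaves TV TA - {u})"
  using assms by (auto simp: leaves_def)

lemma out_tree_attach_path:
  assumes "out_tree TV TA s" "p \<noteq> []" "hd p \<in> TV" "set (tl p) \<inter> TV = {}" "distinct p"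
  shows "out_tree (TV \<union> set p) (TA \<union> path_arcs p) s \<and>
    leaves (TV \<union> set p) (TA \<union> path_arcs p) =
      (if tl p = [] then leaves TV TA else insert (last p) (leaves TV TA - {hd p}))"
  using assms
proof (induction p arbitrary: TV TA)
  case Nil
  then show ?case by simp
next
  case (Cons u p)
  show ?case
  proof (cases p)
    case Nil
    then show ?thesis using Cons.prems by (simp add: insert_absorb)
  next
    case (Cons v q)
    have u: "u \<in> TV" and v: "v \<notin> TV" using Cons.prems \<open>p = v # q\<close> by auto
    have sub: "TA \<subseteq> TV \<times> TV" using Cons.prems(1) by (simp add: out_tree_def oriented_tree_def)
    have T': "out_tree (insert v TV) (insert (u, v) TA) s"
      using out_tree_add_pendant[OF Cons.prems(1) u v] .
    have "u \<noteq> v" using u v by auto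
    have L': "leaves (insert v TV) (insert (u, v) TA) = insert v (leaves TV TA - {u})"
      using leaves_add_pendant[OF sub v \<open>u \<noteq> v\<close>] .
    have "v \<notin> leaves TV TA" using v leaves_subset[of TV TA] by blast
    moreover have "insert v TV \<union> set p = TV \<union> set (u # p)"
      and "insert (u, v) TA \<union> path_arcs p = TA \<union> path_arcs (u # p)"
      using u \<open>p = v # q\<close> by auto
    moreover have "out_tree (insert v TV \<union> set p) (insert (u, v) TA \<union> path_arcs p) s \<and>
      leaves (insert v TV \<union> set p) (insert (u, v) TA \<union> path_arcs p) =
      (if tl p = [] then leaves (insert v TV) (insert (u, v) TA)
       else insert (last p) (leaves (insert v TV) (insert (u, v) TA) - {hd p}))"
    proof (rule Cons.IH[OF T'])
      show "p \<noteq> []" "hd p \<in> insert v TV" using \<open>p = v # q\<close> by auto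
      show "distinct p" using Cons.prems(5) by simp
      then show "set (tl p) \<inter> insert v TV = {}"
        using Cons.prems(4) \<open>p = v # q\<close> by auto
    qed
    ultimately show ?thesis using L' \<open>p = v # q\<close> \<open>u \<noteq> v\<close> by (simp add: insert_Diff_if)
  qed
qed

lemma is_path_path_arcs: "is_path V A p u v \<Longrightarrow> path_arcs p \<subseteq> A"
  unfolding is_path_def path_arcs_def by (auto simp: set_zip nth_tl)

lemma is_path_take:
  assumes "is_path V A p u v" "i < length p"
  shows "is_path V A (take (Suc i) p) u (p ! i)"
proof -
  have "last (take (Suc i) p) = p ! i" using assms(2) by (simp add: take_Suc_conv_app_nth)
  then show ?thesis
    using assms set_take_subset[of "Suc i" p] unfolding is_path_def by (auto simp: hd_take)
qed

lemma is_path_arc: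
  assumes "(u, v) \<in> A" "A \<subseteq> V \<times> V" "u \<noteq> v"
  shows "is_path V A [u, v] u v"
  using assms by (auto simp: is_path_def less_Suc_eq)

lemma is_path_tl_nonempty: "is_path V A p u v \<Longrightarrow> u \<noteq> v \<Longrightarrow> tl p \<noteq> []"
  by (cases p) (auto simp: is_path_def)

lemma is_path_short:
  assumes "is_path V A p u v" "u \<noteq> v" "length p \<le> 2"
  shows "p = [u, v]"
  using assms by (cases p rule: remdups_adj.cases) (auto simp: is_path_def)

lemma diblock_subset: "B \<subseteq> S \<times> S \<Longrightarrow> diblock S B x \<subseteq> insert x S"
  by (auto simp: diblock_def)

lemma Xset_subset: "Xset S B x b \<subseteq> S - diblock S B x"
  by (auto simp: Xset_def)

lemma Xset_entered_after_bottleneck: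
  assumes p: "is_path S B p x y" and i: "i < length p" and X: "p ! i \<in> Xset S B x b"
    and b: "b \<in> diblock S B x"
  shows "b \<in> set (take i p)"
proof -
  let ?D = "diblock S B x" and ?q = "take (Suc i) p"
  have q: "is_path S B ?q x (p ! i)" using is_path_take[OF p i] .
  then have last: "last (filter (\<lambda>u. u \<in> ?D) ?q) = b"
    using X unfolding Xset_def by blast
  have "x \<in> set ?q" using q unfolding is_path_def by (metis hd_in_set)
  moreover have "x \<in> ?D" by (simp add: diblock_def)
  ultimately have "filter (\<lambda>u. u \<in> ?D) ?q \<noteq> []" by (auto simp: filter_empty_conv)
  then have "b \<in> set ?q" using last_in_set last by fastforce
  moreover have "p ! i \<noteq> b" using X b Xset_subset[of S B x b] by blast
  ultimately show ?thesis using i by (auto simp: take_Suc_conv_app_nth)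
qed

lemma path_avoiding_bottleneck_avoids_Xset:
  assumes "is_path S B p x y" "b \<in> diblock S B x" "b \<notin> set p"
  shows "set p \<inter> Xset S B x b = {}"
proof -
  have "p ! i \<notin> Xset S B x b" if "i < length p" for i
    using Xset_entered_after_bottleneck[OF assms(1) that _ assms(2)] assms(3) in_set_takeD by metis
  then show ?thesis by (auto simp: in_set_conv_nth)
qed

lemma path_to_bottleneck_avoids_Xset:
  assumes p: "is_path S B p x b" and b: "b \<in> diblock S B x"
  shows "set p \<inter> Xset S B x b = {}"
proof -
  have "p ! i \<notin> Xset S B x b" if i: "i < length p" for i
  proof -
    have "p ! (length p - 1) = b" "distinct p" using p by (auto simp: is_path_def last_conv_nth)
    then have "b \<notin> set (take i p)" using i by (auto simp: in_set_conv_nth nth_eq_iff_index_eq)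
    then show ?thesis using Xset_entered_after_bottleneck[OF p i _ b] by blast
  qed
  then show ?thesis by (auto simp: in_set_conv_nth)
qed

lemma diblock_path:
  assumes "v \<in> diblock S B x" "v \<noteq> x" "B \<subseteq> S \<times> S"
  shows "\<exists>p. is_path S B p x v"
proof (cases "bireach S B x v")
  case True
  then show ?thesis unfolding bireach_def by blast
next
  case False
  then have "(x, v) \<in> B" using assms by (auto simp: diblock_def)
  then show ?thesis using is_path_arc[of x v B S] assms by blast
qed

lemma diblock_path_avoiding:
  assumes v: "v \<in> diblock S B x" "v \<noteq> x" and b: "b \<noteq> x" "b \<noteq> v" and B: "B \<subseteq> S \<times> S"
  shows "\<exists>p. is_path S B p x v \<and> b \<notin> set p"
proof (cases "bireach S B x v")
  case True
  \<comment> \<open>b is an inner vertex of at most one of two internally disjoint paths\<close>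
  then obtain p q where "is_path S B p x v" "is_path S B q x v"
    "(set p - {x, v}) \<inter> (set q - {x, v}) = {}" unfolding bireach_def by blast
  then show ?thesis using b by blast
next
  case False
  then have "is_path S B [x, v] x v" using v B is_path_arc[of x v B S] by (auto simp: diblock_def)
  then show ?thesis using b by auto
qed

lemma internally_disjoint_paths_branch:
  assumes p: "is_path S B p x b" and q: "is_path S B q x b" and len: "3 \<le> length q"
    and disj: "(set p - {x, b}) \<inter> (set q - {x, b}) = {}"
  shows "\<exists>Q z. is_path S B Q x z \<and> z \<noteq> x \<and> set p \<inter> set Q = {x}"
proof -
  let ?Q = "take (length q - 1) q" and ?z = "q ! (length q - 2)"
  have dq: "distinct q" and hq: "q ! 0 = x" and lq: "q ! (length q - 1) = b"
    using q len by (auto simp: is_path_def hd_conv_nth last_conv_nth)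
  have Q: "is_path S B ?Q x ?z"
    using is_path_take[OF q, of "length q - 2"] len by (simp add: Suc_diff_Suc numeral_2_eq_2)
  have "?z \<noteq> x" using nth_eq_iff_index_eq[OF dq, of "length q - 2" 0] hq len by force
  moreover have "b \<notin> set ?Q" using dq lq len by (auto simp: in_set_conv_nth nth_eq_iff_index_eq)
  moreover have "x \<in> set p" "x \<in> set ?Q" using p Q unfolding is_path_def by (metis hd_in_set)+
  moreover have "set ?Q \<subseteq> set q" by (rule set_take_subset)
  ultimately show ?thesis using Q disj by blast
qed

lemma nondegenerate_diblock_two_branches:
  assumes bn: "bottleneck S B x b" and B: "B \<subseteq> S \<times> S" and fin: "finite S"
    and D: "card (diblock S B x) \<noteq> 2"
  shows "\<exists>P Q z. is_path S B P x b \<and> is_path S B Q x z \<and> z \<noteq> x \<and> set P \<inter> set Q = {x}"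
proof -
  let ?D = "diblock S B x"
  have bD: "b \<in> ?D" and xb: "b \<noteq> x" using bn by (auto simp: bottleneck_def)
  have "finite ?D" using diblock_subset[OF B] fin finite_subset by blast
  moreover have "x \<in> ?D" by (simp add: diblock_def)
  moreover have "?D \<noteq> {x, b}" using D xb by auto
  ultimately obtain v where vD: "v \<in> ?D" and v: "v \<noteq> x" "v \<noteq> b"
    using bD by blast
  show ?thesis
  proof (cases "bireach S B x b")
    case True
    then obtain p q where p: "is_path S B p x b" and q: "is_path S B q x b" and "p \<noteq> q"
      and disj: "(set p - {x, b}) \<inter> (set q - {x, b}) = {}" unfolding bireach_def by blast
    \<comment> \<open>two distinct x-b paths cannot both be the single arc xb\<close>
    have "3 \<le> length q \<or> 3 \<le> length p"
      using is_path_short[OF p xb[symmetric]] is_path_short[OF q xb[symmetric]] \<open>p \<noteq> q\<close>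
      by fastforce
    then show ?thesis
    proof
      assume "3 \<le> length q"
      then show ?thesis using internally_disjoint_paths_branch[OF p q _ disj] p by blast
    next
      assume "3 \<le> length p"
      moreover have "(set q - {x, b}) \<inter> (set p - {x, b}) = {}" using disj by blast
      ultimately obtain Q z where "is_path S B Q x z" "z \<noteq> x" "set q \<inter> set Q = {x}"
        using internally_disjoint_paths_branch[OF q p] by blast
      then show ?thesis using q by blast
    qed
  next
    case False
    then have P: "is_path S B [x, b] x b"
      using bD xb B is_path_arc[of x b B S] by (auto simp: diblock_def)
    obtain Q where "is_path S B Q x v" "b \<notin> set Q"
      using diblock_path_avoiding[OF vD v(1) xb v(2)[symmetric] B] by blast
    moreover from this have "x \<in> set Q" unfolding is_path_def by (metis hd_in_set)
    ultimately show ?thesis using P v by (intro exI[of _ "[x, b]"] exI[of _ Q] exI[of _ v]) auto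
  qed
qed

lemma bottleneck_branches:
  assumes bn: "bottleneck S B x b" and B: "B \<subseteq> S \<times> S" and fin: "finite S"
  obtains P where "is_path S B P x b"
    and "card (diblock S B x) \<noteq> 2 \<longrightarrow>
           (\<exists>Q z. is_path S B Q x z \<and> z \<noteq> x \<and> set P \<inter> set Q = {x})"
proof (cases "card (diblock S B x) = 2")
  case True
  have "b \<in> diblock S B x" "b \<noteq> x" using bn by (auto simp: bottleneck_def)
  then show ?thesis using that diblock_path[OF _ _ B] True by blast
next
  case False
  then show ?thesis using that nondegenerate_diblock_two_branches[OF bn B fin] by blast
qed

lemma out_tree_extend_by_path:
  assumes T: "out_tree TV TA s" and P: "is_path W B P x y" and xy: "x \<noteq> y"
    and PT: "set P \<inter> TV = {x}"
  shows "out_tree (TV \<union> set P) (TA \<union> path_arcs P) s"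
    and "leaves (TV \<union> set P) (TA \<union> path_arcs P) = insert y (leaves TV TA - {x})"
    and "card (leaves (TV \<union> set P) (TA \<union> path_arcs P)) =
           card (leaves TV TA) + (if x \<in> leaves TV TA then 0 else 1)"
proof -
  have P': "P = x # tl P" "last P = y" "distinct P" "hd P = x" using P by (auto simp: is_path_def)
  then have "x \<notin> set (tl P)" and "set (tl P) \<subseteq> set P" by (metis distinct.simps(2), metis set_subset_Cons)
  then have "set (tl P) \<inter> TV = {}" using PT by auto
  moreover have "P \<noteq> []" "hd P \<in> TV" using P' PT by (metis list.distinct(1), metis IntE insertI1 list.sel(1))
  ultimately have *: "out_tree (TV \<union> set P) (TA \<union> path_arcs P) s \<and>
      leaves (TV \<union> set P) (TA \<union> path_arcs P) = insert y (leaves TV TA - {x})"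
    using out_tree_attach_path[OF T \<open>P \<noteq> []\<close> \<open>hd P \<in> TV\<close> \<open>set (tl P) \<inter> TV = {}\<close> P'(3)]
      P'(2,4) is_path_tl_nonempty[OF P xy] by simp
  then show "out_tree (TV \<union> set P) (TA \<union> path_arcs P) s"
    and L: "leaves (TV \<union> set P) (TA \<union> path_arcs P) = insert y (leaves TV TA - {x})" by auto
  have "y \<in> set P" using P' \<open>P \<noteq> []\<close> last_in_set by metis
  then have "y \<notin> leaves TV TA" using PT xy leaves_subset[of TV TA] by auto
  moreover have "finite (leaves TV TA)"
    using out_tree_finite[OF T] leaves_subset[of TV TA] finite_subset by blast
  ultimately show "card (leaves (TV \<union> set P) (TA \<union> path_arcs P)) =
      card (leaves TV TA) + (if x \<in> leaves TV TA then 0 else 1)"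
    unfolding L by (auto simp: card_Diff_singleton_if) (metis card_0_eq empty_iff Suc_pred neq0_conv)
qed

definition out_tree_with_leaf :: "'a set \<Rightarrow> ('a \<times> 'a) set \<Rightarrow> 'a \<Rightarrow> 'a \<Rightarrow> 'a set \<Rightarrow> nat \<Rightarrow> bool" where
  "out_tree_with_leaf V A s x S k \<longleftrightarrow> (\<exists>TV TA. TV \<subseteq> V \<and> TA \<subseteq> A \<and> out_tree TV TA s \<and>
     x \<in> leaves TV TA \<and> TV \<inter> S = {x} \<and> k \<le> card (leaves TV TA))"

lemma out_tree_with_leaf_bottleneck:
  assumes T: "out_tree_with_leaf V A s x S k" and bn: "bottleneck S (ind A S) x b"
    and SV: "S \<subseteq> V" and fin: "finite V"
  shows "out_tree_with_leaf V A s b (insert b (Xset S (ind A S) x b))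
           (k + (if nondeg A (x, S) then 1 else 0))"
proof -
  let ?B = "ind A S" and ?X = "Xset S (ind A S) x b"
  obtain TV TA where TV: "TV \<subseteq> V" "TA \<subseteq> A" and ot: "out_tree TV TA s"
    and xL: "x \<in> leaves TV TA" and TS: "TV \<inter> S = {x}" and k: "k \<le> card (leaves TV TA)"
    using T unfolding out_tree_with_leaf_def by blast
  have B: "?B \<subseteq> S \<times> S" "?B \<subseteq> A" by (auto simp: ind_def)
  have bD: "b \<in> diblock S ?B x" and xb: "b \<noteq> x" using bn by (auto simp: bottleneck_def)
  have "b \<in> S" using diblock_subset[OF B(1)] bD xb by blast
  moreover have "x \<notin> ?X" and "?X \<subseteq> S" using Xset_subset[of S ?B x b] by (auto simp: diblock_def)
  ultimately have TX: "TV \<inter> insert b ?X = {}" using TS xb by auto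
  have "finite S" using SV fin finite_subset by blast
  then obtain P where P: "is_path S ?B P x b" and branch: "card (diblock S ?B x) \<noteq> 2 \<longrightarrow>
      (\<exists>Q z. is_path S ?B Q x z \<and> z \<noteq> x \<and> set P \<inter> set Q = {x})"
    by (rule bottleneck_branches[OF bn B(1)])
  have PS: "set P \<subseteq> S" "b \<in> set P" "x \<in> set P"
    using P unfolding is_path_def by (auto intro: hd_in_set last_in_set)
  then have "set P \<inter> TV = {x}" using TS by auto
  note T1 = out_tree_extend_by_path[OF ot P xb[symmetric] this]
  let ?TV1 = "TV \<union> set P" and ?TA1 = "TA \<union> path_arcs P"
  have TV1: "?TV1 \<subseteq> V" "?TA1 \<subseteq> A" using TV PS SV is_path_path_arcs[OF P] B by auto
  have X1: "?TV1 \<inter> insert b ?X = {b}"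
    using TX path_to_bottleneck_avoids_Xset[OF P bD] PS by auto
  have L1: "b \<in> leaves ?TV1 ?TA1" "x \<notin> leaves ?TV1 ?TA1" using T1(2) xb by auto
  have C1: "card (leaves ?TV1 ?TA1) = card (leaves TV TA)" using T1(3) xL by simp
  show ?thesis
  proof (cases "nondeg A (x, S)")
    case False
    then show ?thesis using TV1 T1(1) L1 X1 C1 k unfolding out_tree_with_leaf_def
      by (intro exI[of _ ?TV1] exI[of _ ?TA1]) auto
  next
    case True
    then have "card (diblock S ?B x) \<noteq> 2" using bn by (auto simp: nondeg_def)
    then obtain Q z where Q: "is_path S ?B Q x z" and zx: "z \<noteq> x" and PQ: "set P \<inter> set Q = {x}"
      using branch by blast
    have QS: "set Q \<subseteq> S" "x \<in> set Q" using Q unfolding is_path_def by (auto intro: hd_in_set)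
    have "b \<notin> set Q" using PQ PS xb by auto
    then have QX: "set Q \<inter> ?X = {}" using path_avoiding_bottleneck_avoids_Xset[OF Q bD] by blast
    have "set Q \<inter> ?TV1 = {x}" using QS PQ TS by auto
    note T2 = out_tree_extend_by_path[OF T1(1) Q zx[symmetric] this]
    have "?TV1 \<union> set Q \<subseteq> V" "?TA1 \<union> path_arcs Q \<subseteq> A"
      using TV1 QS SV is_path_path_arcs[OF Q] B by auto
    moreover have "(?TV1 \<union> set Q) \<inter> insert b ?X = {b}" using X1 QX \<open>b \<notin> set Q\<close> by auto
    moreover have "b \<in> leaves (?TV1 \<union> set Q) (?TA1 \<union> path_arcs Q)" using T2(2) L1 xb by auto
    moreover have "card (leaves (?TV1 \<union> set Q) (?TA1 \<union> path_arcs Q)) = card (leaves TV TA) + 1"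
      using T2(3) L1 C1 by simp
    ultimately show ?thesis using T2(1) True k unfolding out_tree_with_leaf_def
      by (intro exI[of _ "?TV1 \<union> set Q"] exI[of _ "?TA1 \<union> path_arcs Q"]) auto
  qed
qed

lemma cd_path_last_subset:
  assumes "cd_path V A s ys"
  shows "ys \<noteq> [] \<and> snd (last ys) \<subseteq> V"
  using assms
proof induction
  case (child ps x S b)
  have "diblock S (ind A S) x \<subseteq> insert x S" by (rule diblock_subset) (auto simp: ind_def)
  then have "b \<in> S" using child.hyps(2) by (auto simp: bottleneck_def)
  then show ?case using child.IH Xset_subset[of S "ind A S" x b] by auto
qed simp

lemma cd_path_out_tree_with_leaf:
  assumes "cd_path V A s ys" and "finite V" and "s \<in> V"
  shows "out_tree_with_leaf V A s (fst (last ys)) (snd (last ys))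
           (length (filter (nondeg A) (butlast ys)) + 1)"
  using assms(1)
proof induction
  case root
  show ?case
    unfolding out_tree_with_leaf_def using out_tree_singleton[of s] leaves_singleton[of s] assms(3)
    by (intro exI[of _ "{s}"] exI[of _ "{}"]) auto
next
  case (child ps x S b)
  have "S \<subseteq> V" using cd_path_last_subset[OF child.hyps(1)] by simp
  moreover have "out_tree_with_leaf V A s x S (length (filter (nondeg A) ps) + 1)"
    using child.IH by simp
  ultimately have "out_tree_with_leaf V A s b (insert b (Xset S (ind A S) x b))
      (length (filter (nondeg A) ps) + 1 + (if nondeg A (x, S) then 1 else 0))"
    using out_tree_with_leaf_bottleneck[OF _ child.hyps(2) _ assms(2)] by blast
  then show ?case by (cases "nondeg A (x, S)") (simp_all add: butlast_append)
qed

theorem lemma11: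
  fixes V :: "'a set" and A :: "('a \<times> 'a) set" and s :: 'a and ys :: "('a \<times> 'a set) list"
    and l :: nat
  assumes "finite V" and "A \<subseteq> V \<times> V" and "\<forall>v. (v, v) \<notin> A"
    and "2 \<le> card V" and "s \<in> V"
    and "\<forall>v\<in>V. \<exists>p. is_path V A p s v"
    and "cd_path V A s ys"
    and "1 \<le> l" and "l \<le> length (filter (nondeg A) ys)"
  shows "\<exists>TV TA. TV \<subseteq> V \<and> TA \<subseteq> A \<and> out_tree TV TA s \<and> l \<le> card (leaves TV TA)"
proof -
  have "ys = butlast ys @ [last ys]" using cd_path_last_subset[OF assms(7)] by simp
  then have "length (filter (nondeg A) ys) = length (filter (nondeg A) (butlast ys @ [last ys]))"
    by (rule arg_cong)
  also have "\<dots> \<le> length (filter (nondeg A) (butlast ys)) + 1" by simp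
  finally have "l \<le> length (filter (nondeg A) (butlast ys)) + 1" using assms(9) by linarith
  then show ?thesis
    using cd_path_out_tree_with_leaf[OF assms(7,1,5)] unfolding out_tree_with_leaf_def
    by (meson order_trans)
qed

end
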